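(* Let $0<t<1$ and $\alpha>0$. Define $H^{t}:\mathbb{R}\to\mathbb{R}$ by $H^{t}(p)=0$ if $p=0$, $H^{t}(p)=t$ if $0<|p|\le 1$, and $H^{t}(p)=1$ if $|p|>1$. Let $x\in\mathbb{R}$ with $|x|\ge 1$, and consider the function $E(p)=(x-p)^{2}+\alpha H^{t}(p)$ of $p\in\mathbb{R}$. Then $E$ attains its global minimum over $p\in\mathbb{R}$ at $$p=\begin{cases}0 & \text{if } |x|\le \min\!\left(\frac{1+\alpha t}{2},\sqrt{\alpha}\right),\\ \operatorname{sgn}(x) & \text{if } \frac{1+\alpha t}{2}<|x|\le 1+\sqrt{\alpha(1-t)},\\ x & \text{if } |x|>\max\!\left(1+\sqrt{\alpha(1-t)},\sqrt{\alpha}\right).\end{cases}$$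
   Context: $\operatorname{sgn}(x)$ denotes the sign of $x$ ($1$ if $x>0$, $-1$ if $x<0$). The function $H^{t}$ is the per-entry penalty of the "$l_0^t$ measure", which counts entries of absolute value greater than $1$ with weight $1$ and nonzero entries of absolute value at most $1$ with weight $t$. *)

theory Defs
  imports Complex_Main
begin

definition Ht :: "real \<Rightarrow> real \<Rightarrow> real" where
  "Ht t p = (if p = 0 then 0 else if \<bar>p\<bar> \<le> 1 then t else 1)"

end

theory Submission
  imports Defs
begin

text \<open>For \<open>|x| \<ge> 1\<close> each of the three regimes of the penalty has an obvious best point:
  \<open>p = 0\<close> costs \<open>x\<^sup>2\<close>; among \<open>0 < |p| \<le> 1\<close> the point \<open>sgn x\<close> is closest to \<open>x\<close> and costs
  \<open>(|x| - 1)\<^sup>2 + \<alpha> t\<close>; and \<open>|p| > 1\<close> costs at least \<open>\<alpha>\<close>, attained at \<open>p = x\<close> when \<open>|x| > 1\<close>.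
  So \<open>E\<close> is bounded below by the least of these three values, and each case of the theorem
  is the comparison of the three numbers, i.e. two quadratic inequalities in \<open>|x|\<close>.\<close>

lemma Ht_zero [simp]: "Ht t 0 = 0"
  by (simp add: Ht_def)

lemma Ht_small: "p \<noteq> 0 \<Longrightarrow> \<bar>p\<bar> \<le> 1 \<Longrightarrow> Ht t p = t"
  by (simp add: Ht_def)

lemma Ht_large: "1 < \<bar>p\<bar> \<Longrightarrow> Ht t p = 1"
  by (simp add: Ht_def)

lemma power2_abs_minus_one_le:
  fixes x q :: real
  assumes "1 \<le> \<bar>x\<bar>" "\<bar>q\<bar> \<le> 1"
  shows "(\<bar>x\<bar> - 1)\<^sup>2 \<le> (x - q)\<^sup>2"
proof -
  have "\<bar>\<bar>x\<bar> - 1\<bar> \<le> \<bar>x - q\<bar>"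
    using assms by linarith
  then show ?thesis
    by (simp add: abs_le_square_iff)
qed

lemma penalized_square_at_sgn:
  fixes x t \<alpha> :: real
  assumes "x \<noteq> 0"
  shows "(x - sgn x)\<^sup>2 + \<alpha> * Ht t (sgn x) = (\<bar>x\<bar> - 1)\<^sup>2 + \<alpha> * t"
proof -
  have "Ht t (sgn x) = t"
    using assms by (intro Ht_small) (simp_all add: sgn_0_0 abs_sgn)
  moreover have "(x - sgn x)\<^sup>2 = (\<bar>x\<bar> - 1)\<^sup>2"
    using assms by (auto simp: sgn_if power2_eq_square algebra_simps)
  ultimately show ?thesis
    by simp
qed

lemma one_plus_sqrt_less_abs:
  fixes c x :: real
  assumes "0 \<le> c" "1 + sqrt c < \<bar>x\<bar>"
  shows "1 < \<bar>x\<bar>" "c \<le> (\<bar>x\<bar> - 1)\<^sup>2"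
proof -
  show "1 < \<bar>x\<bar>"
    using assms real_sqrt_ge_zero[of c] by linarith
  show "c \<le> (\<bar>x\<bar> - 1)\<^sup>2"
    using assms(2) by (intro sqrt_le_D) linarith
qed

lemma penalized_square_ge_min:
  fixes x q t \<alpha> :: real
  assumes "1 \<le> \<bar>x\<bar>"
  shows "min (x\<^sup>2) (min ((\<bar>x\<bar> - 1)\<^sup>2 + \<alpha> * t) \<alpha>) \<le> (x - q)\<^sup>2 + \<alpha> * Ht t q"
proof -
  consider "q = 0" | "q \<noteq> 0" "\<bar>q\<bar> \<le> 1" | "1 < \<bar>q\<bar>"
    by linarith
  then show ?thesis
  proof cases
    case 1
    then show ?thesis by simp
  next
    case 2
    then show ?thesis
      using power2_abs_minus_one_le[OF assms \<open>\<bar>q\<bar> \<le> 1\<close>] by (simp add: Ht_small)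
  next
    case 3
    then have "\<alpha> \<le> (x - q)\<^sup>2 + \<alpha> * Ht t q"
      by (simp add: Ht_large)
    then show ?thesis
      by (simp add: min_le_iff_disj)
  qed
qed

theorem theorem3p1:
  fixes t \<alpha> x :: real
  assumes "0 < t" "t < 1" "0 < \<alpha>" "\<bar>x\<bar> \<ge> 1"
  defines "E \<equiv> (\<lambda>p. (x - p)\<^sup>2 + \<alpha> * Ht t p)"
  shows "(\<bar>x\<bar> \<le> min ((1 + \<alpha> * t) / 2) (sqrt \<alpha>) \<longrightarrow> (\<forall>q. E 0 \<le> E q))
       \<and> ((1 + \<alpha> * t) / 2 < \<bar>x\<bar> \<and> \<bar>x\<bar> \<le> 1 + sqrt (\<alpha> * (1 - t)) \<longrightarrow> (\<forall>q. E (sgn x) \<le> E q))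
       \<and> (\<bar>x\<bar> > max (1 + sqrt (\<alpha> * (1 - t))) (sqrt \<alpha>) \<longrightarrow> (\<forall>q. E x \<le> E q))"
proof -
  let ?m = "min (x\<^sup>2) (min ((\<bar>x\<bar> - 1)\<^sup>2 + \<alpha> * t) \<alpha>)"
  have lower: "?m \<le> E q" for q
    unfolding E_def using penalized_square_ge_min[OF assms(4)] .
  have E_zero: "E 0 = x\<^sup>2"
    by (simp add: E_def)
  have E_sgn: "E (sgn x) = (\<bar>x\<bar> - 1)\<^sup>2 + \<alpha> * t"
    using assms(4) by (simp add: E_def penalized_square_at_sgn)
  have expand: "(\<bar>x\<bar> - 1)\<^sup>2 = x\<^sup>2 - 2 * \<bar>x\<bar> + 1"
    by (simp add: power2_eq_square algebra_simps)
  have zero_min: "\<forall>q. E 0 \<le> E q" if "\<bar>x\<bar> \<le> min ((1 + \<alpha> * t) / 2) (sqrt \<alpha>)"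
    using that sqrt_ge_absD[of x \<alpha>] expand lower order_trans by (simp add: E_zero)
  have sgn_min: "\<forall>q. E (sgn x) \<le> E q"
    if "(1 + \<alpha> * t) / 2 < \<bar>x\<bar>" "\<bar>x\<bar> \<le> 1 + sqrt (\<alpha> * (1 - t))"
    using that assms(4) sqrt_ge_absD[of "\<bar>x\<bar> - 1" "\<alpha> * (1 - t)"] expand lower order_trans
    by (simp add: E_sgn algebra_simps)
  have id_min: "\<forall>q. E x \<le> E q" if "max (1 + sqrt (\<alpha> * (1 - t))) (sqrt \<alpha>) < \<bar>x\<bar>"
  proof -
    have "1 < \<bar>x\<bar>" "\<alpha> * (1 - t) \<le> (\<bar>x\<bar> - 1)\<^sup>2" "\<alpha> \<le> x\<^sup>2"
      using that assms one_plus_sqrt_less_abs[of "\<alpha> * (1 - t)" x] sqrt_le_D[of \<alpha> "\<bar>x\<bar>"]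
      by simp_all
    then show ?thesis
      using lower order_trans by (simp add: E_def Ht_large algebra_simps)
  qed
  show ?thesis
    using zero_min sgn_min id_min by blast
qed

end
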